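(* Let $\mathbf S=\langle S,+,0,\mathscr F\rangle$ be a semilattice with operators, and define $\eta$ on $\operatorname{Con}\mathbf S$ by $\eta(\theta)=\operatorname{con}_{\mathrm{SL}}(0/\theta)$, the semilattice congruence generated by collapsing the $0$-class of $\theta$ to $0$. Then $\eta$ satisfies, for all $x,y,z\in L=\operatorname{Con}\mathbf S$: (I1) $\eta(x)\le x$; (I2) $x\ge y$ implies $\eta(x)\ge\eta(y)$; (I3) $\eta^2(x)=\eta(x)$; (I4) $\eta(1)=1$; (I5) if $\eta(x)=u$ for all $x\in X\subseteq L$ then $\eta(\bigvee X)=u$; (I6) $\eta(x)\vee(y\wedge z)=(\eta(x)\vee y)\wedge(\eta(x)\vee z)$; (I7) the image $\eta(L)$ is the complete join subsemilattice of $L$ generated by $\eta(L)\cap L_c$, where $L_c$ is the set of compact elements of $L$.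
   Context: A semilattice with operators is a join semilattice $(S,+)$ with least element $0$ together with a set $\mathscr F$ of unary maps preserving $+$ and $0$; congruences are equivalence relations compatible with $+$ and all $f\in\mathscr F$. $0/\theta$ denotes the $0$-class of $\theta$. Explicitly, $x\,\eta(\theta)\,y$ iff $x+i=y+i$ for some $i\in 0/\theta$ (this relation is a congruence of $\mathbf S$). *)

theory Defs
  imports Main
begin

text \<open>A semilattice with operators: the join semilattice is the type 'a with
  sup as + and bot as 0; F is the set of operators (maps preserving sup and bot).\<close>

definition is_operator_set :: "('a::{semilattice_sup,order_bot} \<Rightarrow> 'a) set \<Rightarrow> bool" where
  "is_operator_set F \<longleftrightarrow>
     (\<forall>f\<in>F. (\<forall>a b. f (sup a b) = sup (f a) (f b)) \<and> f bot = bot)"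

definition Con :: "('a::{semilattice_sup,order_bot} \<Rightarrow> 'a) set \<Rightarrow> ('a \<times> 'a) set set" where
  "Con F = {\<theta>. equiv UNIV \<theta>
       \<and> (\<forall>a b c d. (a,b) \<in> \<theta> \<longrightarrow> (c,d) \<in> \<theta> \<longrightarrow> (sup a c, sup b d) \<in> \<theta>)
       \<and> (\<forall>f\<in>F. \<forall>a b. (a,b) \<in> \<theta> \<longrightarrow> (f a, f b) \<in> \<theta>)}"

text \<open>Join in the lattice Con S: the least congruence containing all members of X.
  Meet is intersection, order is inclusion, top is UNIV.\<close>
definition conJoin :: "('a::{semilattice_sup,order_bot} \<Rightarrow> 'a) set \<Rightarrow> ('a \<times> 'a) set set \<Rightarrow> ('a \<times> 'a) set" where
  "conJoin F X = \<Inter>{\<theta> \<in> Con F. \<Union>X \<subseteq> \<theta>}"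

definition con_compact :: "('a::{semilattice_sup,order_bot} \<Rightarrow> 'a) set \<Rightarrow> ('a \<times> 'a) set \<Rightarrow> bool" where
  "con_compact F \<theta> \<longleftrightarrow> \<theta> \<in> Con F \<and>
     (\<forall>X \<subseteq> Con F. \<theta> \<subseteq> conJoin F X \<longrightarrow> (\<exists>Y \<subseteq> X. finite Y \<and> \<theta> \<subseteq> conJoin F Y))"

definition zero_class :: "('a::{semilattice_sup,order_bot} \<times> 'a) set \<Rightarrow> 'a set" where
  "zero_class \<theta> = {i. (i, bot) \<in> \<theta>}"

text \<open>eta(theta) = con_SL(0/theta): x eta y iff x+i = y+i for some i in 0/theta.\<close>
definition eta :: "('a::{semilattice_sup,order_bot} \<times> 'a) set \<Rightarrow> ('a \<times> 'a) set" where
  "eta \<theta> = {(x,y). \<exists>i \<in> zero_class \<theta>. sup x i = sup y i}"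

end

theory Submission
  imports Defs
begin

text \<open>The 0-class \<open>0/\<theta>\<close> of a congruence is an ideal closed under the operators, and
  \<open>\<eta>(\<theta>) \<squnion> \<psi>\<close> is the relation \<open>(a + i) \<psi> (b + i)\<close> for some \<open>i \<in> 0/\<theta>\<close>. Since \<open>0/\<theta>\<close>
  is directed, this description commutes with intersections in \<open>\<psi>\<close>, which gives (I6).
  \<open>\<eta>(\<theta>)\<close> depends only on \<open>0/\<theta>\<close> and has the same 0-class as \<open>\<theta>\<close>, which gives (I1)--(I4);
  a join of congruences sharing a 0-class again has that 0-class, which gives (I5).
  Finally \<open>\<eta>(\<theta>)\<close> is the join of the principal congruences \<open>con(i, 0)\<close>, \<open>i \<in> 0/\<theta>\<close>, which
  are compact and fixed by \<open>\<eta>\<close>, and joins of fixed points of \<open>\<eta>\<close> are fixed; this gives (I7).\<close>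

lemma sup_bot_order_bot [simp]:
  fixes a :: "'a::{semilattice_sup,order_bot}"
  shows "sup a bot = a" "sup bot a = a"
  by (simp_all add: sup_absorb1 sup_absorb2)

lemma Con_refl: "\<theta> \<in> Con F \<Longrightarrow> (a, a) \<in> \<theta>"
  unfolding Con_def equiv_def refl_on_def by blast

lemma Con_sym: "\<theta> \<in> Con F \<Longrightarrow> (a, b) \<in> \<theta> \<Longrightarrow> (b, a) \<in> \<theta>"
  unfolding Con_def equiv_def sym_def by blast

lemma Con_trans: "\<theta> \<in> Con F \<Longrightarrow> (a, b) \<in> \<theta> \<Longrightarrow> (b, c) \<in> \<theta> \<Longrightarrow> (a, c) \<in> \<theta>"
  unfolding Con_def equiv_def trans_def by blast

lemma Con_sup: "\<theta> \<in> Con F \<Longrightarrow> (a, b) \<in> \<theta> \<Longrightarrow> (c, d) \<in> \<theta> \<Longrightarrow> (sup a c, sup b d) \<in> \<theta>"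
  unfolding Con_def by blast

lemma Con_sup_right: "\<theta> \<in> Con F \<Longrightarrow> (a, b) \<in> \<theta> \<Longrightarrow> (sup a c, sup b c) \<in> \<theta>"
  by (blast intro: Con_sup Con_refl)

lemma Con_operator: "\<theta> \<in> Con F \<Longrightarrow> f \<in> F \<Longrightarrow> (a, b) \<in> \<theta> \<Longrightarrow> (f a, f b) \<in> \<theta>"
  unfolding Con_def by blast

lemma ConI:
  fixes \<theta> :: "('a::{semilattice_sup,order_bot} \<times> 'a) set"
  assumes equiv: "equiv UNIV \<theta>"
    and sup: "\<And>a b c. (a, b) \<in> \<theta> \<Longrightarrow> (sup a c, sup b c) \<in> \<theta>"
    and operator: "\<And>f a b. f \<in> F \<Longrightarrow> (a, b) \<in> \<theta> \<Longrightarrow> (f a, f b) \<in> \<theta>"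
  shows "\<theta> \<in> Con F"
proof -
  have "(sup a c, sup b d) \<in> \<theta>" if "(a, b) \<in> \<theta>" "(c, d) \<in> \<theta>" for a b c d
  proof -
    have "(sup a c, sup b c) \<in> \<theta>" "(sup c b, sup d b) \<in> \<theta>"
      using sup that by blast+
    then show ?thesis
      using equiv by (metis equivE sup_commute transD)
  qed
  then show ?thesis
    unfolding Con_def using equiv operator by blast
qed

lemma Id_Con: "(Id :: ('a::{semilattice_sup,order_bot} \<times> 'a) set) \<in> Con F"
  by (rule ConI) (auto intro: equivI refl_Id sym_Id trans_Id)

lemma Inter_Con: "X \<subseteq> Con F \<Longrightarrow> \<Inter>X \<in> Con F"
  by (rule ConI) (auto intro!: equivI refl_onI symI transI
      intro: Con_refl Con_sym Con_trans Con_sup_right Con_operator)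

lemma Int_Con: "\<theta> \<in> Con F \<Longrightarrow> \<psi> \<in> Con F \<Longrightarrow> \<theta> \<inter> \<psi> \<in> Con F"
  using Inter_Con[of "{\<theta>, \<psi>}"] by simp

lemma conJoin_Con: "conJoin F X \<in> Con F"
  unfolding conJoin_def by (rule Inter_Con) blast

lemma conJoin_upper: "\<theta> \<in> X \<Longrightarrow> \<theta> \<subseteq> conJoin F X"
  by (auto simp: conJoin_def)

lemma conJoin_least: "\<psi> \<in> Con F \<Longrightarrow> (\<And>\<theta>. \<theta> \<in> X \<Longrightarrow> \<theta> \<subseteq> \<psi>) \<Longrightarrow> conJoin F X \<subseteq> \<psi>"
  by (auto simp: conJoin_def)

lemma conJoin_unique:
  assumes "\<psi> \<in> Con F" "\<And>\<theta>. \<theta> \<in> X \<Longrightarrow> \<theta> \<subseteq> \<psi>"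
    and "\<And>\<phi>. \<phi> \<in> Con F \<Longrightarrow> (\<And>\<theta>. \<theta> \<in> X \<Longrightarrow> \<theta> \<subseteq> \<phi>) \<Longrightarrow> \<psi> \<subseteq> \<phi>"
  shows "conJoin F X = \<psi>"
  using assms conJoin_Con conJoin_least conJoin_upper by (metis subset_antisym)

subsection \<open>Joins as transitive closures\<close>

lemma rtrancl_compatible:
  assumes "\<And>a b. (a, b) \<in> R \<Longrightarrow> (g a, g b) \<in> R" and "(a, b) \<in> R\<^sup>*"
  shows "(g a, g b) \<in> R\<^sup>*"
  using assms(2)
proof induction
  case (step c d)
  then show ?case using assms(1) by (blast intro: rtrancl_into_rtrancl)
qed simp

lemma rtrancl_Union_Con:
  fixes X :: "('a::{semilattice_sup,order_bot} \<times> 'a) set set"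
  assumes X: "X \<subseteq> Con F"
  shows "(\<Union>X)\<^sup>* \<in> Con F"
proof (rule ConI)
  have "sym (\<Union>X)"
    using X Con_sym unfolding sym_def by blast
  then show "equiv UNIV ((\<Union>X)\<^sup>*)"
    by (simp add: equivI refl_rtrancl sym_rtrancl trans_rtrancl)
next
  fix a b c assume ab: "(a, b) \<in> (\<Union>X)\<^sup>*"
  have "(sup x c, sup y c) \<in> \<Union>X" if "(x, y) \<in> \<Union>X" for x y
    using that X Con_sup_right[of _ F x y c] by blast
  then show "(sup a c, sup b c) \<in> (\<Union>X)\<^sup>*"
    using ab by (rule rtrancl_compatible)
next
  fix f a b assume f: "f \<in> F" and ab: "(a, b) \<in> (\<Union>X)\<^sup>*"
  have "(f x, f y) \<in> \<Union>X" if "(x, y) \<in> \<Union>X" for x y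
    using that X Con_operator[of _ F f x y] f by blast
  then show "(f a, f b) \<in> (\<Union>X)\<^sup>*"
    using ab by (rule rtrancl_compatible)
qed

lemma conJoin_eq_rtrancl: "X \<subseteq> Con F \<Longrightarrow> conJoin F X = (\<Union>X)\<^sup>*"
proof (rule conJoin_unique)
  fix \<phi> assume \<phi>: "\<phi> \<in> Con F" and "\<And>\<theta>. \<theta> \<in> X \<Longrightarrow> \<theta> \<subseteq> \<phi>"
  then have "\<Union>X \<subseteq> \<phi>" by blast
  show "(\<Union>X)\<^sup>* \<subseteq> \<phi>"
  proof clarify
    fix a b assume "(a, b) \<in> (\<Union>X)\<^sup>*"
    then show "(a, b) \<in> \<phi>"
      by induction (use \<phi> \<open>\<Union>X \<subseteq> \<phi>\<close> Con_refl Con_trans in blast)+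
  qed
qed (auto intro: rtrancl_Union_Con)

lemma rtrancl_Union_finite:
  "(a, b) \<in> (\<Union>X)\<^sup>* \<Longrightarrow> \<exists>Y\<subseteq>X. finite Y \<and> (a, b) \<in> (\<Union>Y)\<^sup>*"
proof (induction rule: rtrancl_induct)
  case (step c d)
  then obtain Y t where "Y \<subseteq> X" "finite Y" "(a, c) \<in> (\<Union>Y)\<^sup>*" "t \<in> X" "(c, d) \<in> t"
    by blast
  then have "insert t Y \<subseteq> X" "finite (insert t Y)" "(a, d) \<in> (\<Union>(insert t Y))\<^sup>*"
    by (auto intro: rtrancl_into_rtrancl rtrancl_mono[THEN subsetD, of "\<Union>Y"])
  then show ?case by blast
qed blast

subsection \<open>The 0-class\<close>

lemma bot_in_zero_class: "\<theta> \<in> Con F \<Longrightarrow> bot \<in> zero_class \<theta>"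
  by (simp add: zero_class_def Con_refl)

lemma sup_in_zero_class:
  "\<theta> \<in> Con F \<Longrightarrow> i \<in> zero_class \<theta> \<Longrightarrow> j \<in> zero_class \<theta> \<Longrightarrow> sup i j \<in> zero_class \<theta>"
  using Con_sup[of \<theta> F i bot j bot] by (simp add: zero_class_def)

lemma operator_in_zero_class:
  "is_operator_set F \<Longrightarrow> \<theta> \<in> Con F \<Longrightarrow> f \<in> F \<Longrightarrow> i \<in> zero_class \<theta> \<Longrightarrow> f i \<in> zero_class \<theta>"
  using Con_operator[of \<theta> F f i bot] by (auto simp: zero_class_def is_operator_set_def)

lemma Con_sup_zero_class: "\<theta> \<in> Con F \<Longrightarrow> i \<in> zero_class \<theta> \<Longrightarrow> (sup a i, a) \<in> \<theta>"
  using Con_sup[of \<theta> F a a i bot] by (simp add: zero_class_def Con_refl)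

lemma zero_class_down_closed:
  assumes "\<theta> \<in> Con F" "j \<in> zero_class \<theta>" "i \<le> j"
  shows "i \<in> zero_class \<theta>"
proof -
  have "(j, i) \<in> \<theta>"
    using Con_sup_zero_class[OF assms(1,2), of i] assms(3) by (simp add: sup_absorb2)
  with assms(1,2) show ?thesis
    unfolding zero_class_def by (blast intro: Con_trans Con_sym)
qed

subsection \<open>Joins with \<open>\<eta>\<close>\<close>

text \<open>For \<open>I = 0/\<theta>\<close> this is \<open>\<eta>(\<theta>) \<vee> \<psi>\<close>, see \<open>conJoin_eta_eq_ideal_join\<close>.\<close>
definition ideal_join :: "'a::{semilattice_sup,order_bot} set \<Rightarrow> ('a \<times> 'a) set \<Rightarrow> ('a \<times> 'a) set"
  where "ideal_join I \<psi> = {(a, b). \<exists>i\<in>I. (sup a i, sup b i) \<in> \<psi>}"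

lemma eta_eq_ideal_join: "eta \<theta> = ideal_join (zero_class \<theta>) Id"
  by (simp add: eta_def ideal_join_def)

lemma Con_enlarge_witness:
  assumes "\<psi> \<in> Con F" "(sup a i, sup b i) \<in> \<psi>" "i \<le> j"
  shows "(sup a j, sup b j) \<in> \<psi>"
  using Con_sup_right[OF assms(1,2), of j] assms(3) by (simp add: sup_assoc sup_absorb2)

lemma ideal_join_common_witness:
  assumes \<theta>: "\<theta> \<in> Con F" and \<psi>: "\<psi> \<in> Con F" and \<chi>: "\<chi> \<in> Con F"
    and "(a, b) \<in> ideal_join (zero_class \<theta>) \<psi>" "(c, d) \<in> ideal_join (zero_class \<theta>) \<chi>"
  obtains k where "k \<in> zero_class \<theta>" "(sup a k, sup b k) \<in> \<psi>" "(sup c k, sup d k) \<in> \<chi>"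
proof -
  obtain i j where i: "i \<in> zero_class \<theta>" "(sup a i, sup b i) \<in> \<psi>"
    and j: "j \<in> zero_class \<theta>" "(sup c j, sup d j) \<in> \<chi>"
    using assms(4,5) by (auto simp: ideal_join_def)
  have "sup i j \<in> zero_class \<theta>"
    using sup_in_zero_class[OF \<theta> i(1) j(1)] .
  moreover have "(sup a (sup i j), sup b (sup i j)) \<in> \<psi>"
    by (rule Con_enlarge_witness[OF \<psi> i(2)]) simp
  moreover have "(sup c (sup i j), sup d (sup i j)) \<in> \<chi>"
    by (rule Con_enlarge_witness[OF \<chi> j(2)]) simp
  ultimately show thesis by (rule that)
qed

lemma ideal_join_Con:
  assumes ops: "is_operator_set F" and \<theta>: "\<theta> \<in> Con F" and \<psi>: "\<psi> \<in> Con F"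
  shows "ideal_join (zero_class \<theta>) \<psi> \<in> Con F"
proof (rule ConI)
  let ?J = "ideal_join (zero_class \<theta>) \<psi>"
  have "refl ?J"
    using bot_in_zero_class[OF \<theta>] Con_refl[OF \<psi>] by (auto simp: ideal_join_def intro!: refl_onI)
  moreover have "sym ?J"
    using Con_sym[OF \<psi>] by (auto simp: ideal_join_def intro!: symI)
  moreover have "trans ?J"
  proof (rule transI)
    fix a b c assume "(a, b) \<in> ?J" "(b, c) \<in> ?J"
    then obtain k where "k \<in> zero_class \<theta>" "(sup a k, sup b k) \<in> \<psi>" "(sup b k, sup c k) \<in> \<psi>"
      by (rule ideal_join_common_witness[OF \<theta> \<psi> \<psi>])
    then show "(a, c) \<in> ?J"
      unfolding ideal_join_def using Con_trans[OF \<psi>] by blast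
  qed
  ultimately show "equiv UNIV ?J"
    by (simp add: equivI)
next
  fix a b c assume "(a, b) \<in> ideal_join (zero_class \<theta>) \<psi>"
  then obtain i where i: "i \<in> zero_class \<theta>" "(sup a i, sup b i) \<in> \<psi>"
    by (auto simp: ideal_join_def)
  have "(sup (sup a i) c, sup (sup b i) c) \<in> \<psi>"
    using Con_sup_right[OF \<psi> i(2)] .
  then have "(sup (sup a c) i, sup (sup b c) i) \<in> \<psi>"
    by (simp add: ac_simps)
  with i(1) show "(sup a c, sup b c) \<in> ideal_join (zero_class \<theta>) \<psi>"
    unfolding ideal_join_def by blast
next
  fix f a b assume f: "f \<in> F" and "(a, b) \<in> ideal_join (zero_class \<theta>) \<psi>"
  then obtain i where i: "i \<in> zero_class \<theta>" "(sup a i, sup b i) \<in> \<psi>"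
    by (auto simp: ideal_join_def)
  have "f (sup x y) = sup (f x) (f y)" for x y
    using ops f by (simp add: is_operator_set_def)
  then have "(sup (f a) (f i), sup (f b) (f i)) \<in> \<psi>"
    using Con_operator[OF \<psi> f i(2)] by simp
  with operator_in_zero_class[OF ops \<theta> f i(1)]
  show "(f a, f b) \<in> ideal_join (zero_class \<theta>) \<psi>"
    unfolding ideal_join_def by blast
qed

lemma eta_Con: "is_operator_set F \<Longrightarrow> \<theta> \<in> Con F \<Longrightarrow> eta \<theta> \<in> Con F"
  unfolding eta_eq_ideal_join by (rule ideal_join_Con) (auto intro: Id_Con)

lemma conJoin_eta_eq_ideal_join:
  assumes ops: "is_operator_set F" and \<theta>: "\<theta> \<in> Con F" and \<psi>: "\<psi> \<in> Con F"
  shows "conJoin F {eta \<theta>, \<psi>} = ideal_join (zero_class \<theta>) \<psi>"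
proof (rule conJoin_unique)
  show "ideal_join (zero_class \<theta>) \<psi> \<in> Con F"
    using ops \<theta> \<psi> by (rule ideal_join_Con)
  have "eta \<theta> \<subseteq> ideal_join (zero_class \<theta>) \<psi>"
    using Con_refl[OF \<psi>] by (force simp: eta_def ideal_join_def)
  moreover have "\<psi> \<subseteq> ideal_join (zero_class \<theta>) \<psi>"
    using bot_in_zero_class[OF \<theta>] by (auto simp: ideal_join_def intro!: bexI[of _ bot])
  ultimately show "\<And>\<phi>. \<phi> \<in> {eta \<theta>, \<psi>} \<Longrightarrow> \<phi> \<subseteq> ideal_join (zero_class \<theta>) \<psi>"
    by blast
next
  fix \<phi> assume \<phi>: "\<phi> \<in> Con F" and "\<And>\<chi>. \<chi> \<in> {eta \<theta>, \<psi>} \<Longrightarrow> \<chi> \<subseteq> \<phi>"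
  then have eta_sub: "eta \<theta> \<subseteq> \<phi>" and \<psi>_sub: "\<psi> \<subseteq> \<phi>" by auto
  show "ideal_join (zero_class \<theta>) \<psi> \<subseteq> \<phi>"
  proof clarify
    fix a b assume "(a, b) \<in> ideal_join (zero_class \<theta>) \<psi>"
    then obtain i where i: "i \<in> zero_class \<theta>" "(sup a i, sup b i) \<in> \<psi>"
      by (auto simp: ideal_join_def)
    have "(a, sup a i) \<in> eta \<theta>" "(sup b i, b) \<in> eta \<theta>"
      using i(1) unfolding eta_def by (auto intro!: bexI[of _ i] simp: sup_assoc)
    with i(2) show "(a, b) \<in> \<phi>"
      using eta_sub \<psi>_sub Con_trans[OF \<phi>] by blast
  qed
qed

lemma ideal_join_Int:
  assumes \<theta>: "\<theta> \<in> Con F" and \<psi>: "\<psi> \<in> Con F" and \<chi>: "\<chi> \<in> Con F"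
  shows "ideal_join (zero_class \<theta>) (\<psi> \<inter> \<chi>)
    = ideal_join (zero_class \<theta>) \<psi> \<inter> ideal_join (zero_class \<theta>) \<chi>"
proof
  show "ideal_join (zero_class \<theta>) (\<psi> \<inter> \<chi>)
    \<subseteq> ideal_join (zero_class \<theta>) \<psi> \<inter> ideal_join (zero_class \<theta>) \<chi>"
    by (auto simp: ideal_join_def)
next
  show "ideal_join (zero_class \<theta>) \<psi> \<inter> ideal_join (zero_class \<theta>) \<chi>
    \<subseteq> ideal_join (zero_class \<theta>) (\<psi> \<inter> \<chi>)"
  proof clarify
    fix a b assume "(a, b) \<in> ideal_join (zero_class \<theta>) \<psi>" "(a, b) \<in> ideal_join (zero_class \<theta>) \<chi>"
    then obtain k where "k \<in> zero_class \<theta>" "(sup a k, sup b k) \<in> \<psi> \<inter> \<chi>"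
      by (rule ideal_join_common_witness[OF \<theta> \<psi> \<chi>]) blast
    then show "(a, b) \<in> ideal_join (zero_class \<theta>) (\<psi> \<inter> \<chi>)"
      unfolding ideal_join_def by blast
  qed
qed

lemma conJoin_eta_Int:
  assumes "is_operator_set F" "\<theta> \<in> Con F" "\<psi> \<in> Con F" "\<chi> \<in> Con F"
  shows "conJoin F {eta \<theta>, \<psi> \<inter> \<chi>} = conJoin F {eta \<theta>, \<psi>} \<inter> conJoin F {eta \<theta>, \<chi>}"
  using assms by (simp add: conJoin_eta_eq_ideal_join Int_Con ideal_join_Int)

lemma eta_subset:
  assumes \<theta>: "\<theta> \<in> Con F"
  shows "eta \<theta> \<subseteq> \<theta>"
proof clarify
  fix a b assume "(a, b) \<in> eta \<theta>"
  then obtain i where i: "i \<in> zero_class \<theta>" and eq: "sup a i = sup b i"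
    by (auto simp: eta_def)
  have "(sup a i, a) \<in> \<theta>" "(sup b i, b) \<in> \<theta>"
    using Con_sup_zero_class[OF \<theta> i] by blast+
  then show "(a, b) \<in> \<theta>"
    unfolding eq using Con_sym[OF \<theta>] Con_trans[OF \<theta>] by blast
qed

lemma eta_mono: "\<psi> \<subseteq> \<theta> \<Longrightarrow> eta \<psi> \<subseteq> eta \<theta>"
  by (auto simp: eta_def zero_class_def)

lemma eta_cong: "zero_class \<theta> = zero_class \<psi> \<Longrightarrow> eta \<theta> = eta \<psi>"
  by (simp add: eta_def)

lemma zero_class_eta:
  assumes \<theta>: "\<theta> \<in> Con F"
  shows "zero_class (eta \<theta>) = zero_class \<theta>"
proof
  show "zero_class (eta \<theta>) \<subseteq> zero_class \<theta>"
  proof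
    fix a assume "a \<in> zero_class (eta \<theta>)"
    then obtain i where "i \<in> zero_class \<theta>" "sup a i = i"
      by (auto simp: zero_class_def eta_def)
    then show "a \<in> zero_class \<theta>"
      using zero_class_down_closed[OF \<theta>] by (metis le_iff_sup)
  qed
  show "zero_class \<theta> \<subseteq> zero_class (eta \<theta>)"
    unfolding zero_class_def eta_def by (auto intro!: bexI)
qed

lemma eta_idem: "\<theta> \<in> Con F \<Longrightarrow> eta (eta \<theta>) = eta \<theta>"
  by (rule eta_cong) (rule zero_class_eta)

lemma eta_UNIV: "eta UNIV = UNIV"
proof -
  have "sup a (sup a b) = sup b (sup a b)" for a b :: 'a
    by (simp add: sup_left_commute)
  then show ?thesis
    unfolding eta_def zero_class_def by blast
qed

lemma zero_class_conJoin:
  assumes X: "X \<subseteq> Con F" and \<theta>: "\<theta> \<in> X"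
    and same: "\<And>\<psi>. \<psi> \<in> X \<Longrightarrow> zero_class \<psi> = zero_class \<theta>"
  shows "zero_class (conJoin F X) = zero_class \<theta>"
proof
  show "zero_class \<theta> \<subseteq> zero_class (conJoin F X)"
    using conJoin_upper[OF \<theta>] by (auto simp: zero_class_def)
next
  show "zero_class (conJoin F X) \<subseteq> zero_class \<theta>"
  proof
    fix a assume "a \<in> zero_class (conJoin F X)"
    then have "(a, bot) \<in> (\<Union>X)\<^sup>*"
      by (simp add: zero_class_def conJoin_eq_rtrancl[OF X])
    then show "a \<in> zero_class \<theta>"
    proof (induction rule: converse_rtrancl_induct)
      case base
      show ?case using X \<theta> by (auto intro: bot_in_zero_class)
    next
      case (step b c)
      then obtain \<psi> where \<psi>: "\<psi> \<in> X" "(b, c) \<in> \<psi>"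
        by blast
      then have "(c, bot) \<in> \<psi>"
        using same[OF \<psi>(1)] step.IH unfolding zero_class_def by blast
      with \<psi> have "(b, bot) \<in> \<psi>"
        using X Con_trans by blast
      then show ?case
        using same[OF \<psi>(1)] unfolding zero_class_def by blast
    qed
  qed
qed

lemma eta_conJoin_constant:
  assumes "X \<subseteq> Con F" "X \<noteq> {}" "\<And>\<theta>. \<theta> \<in> X \<Longrightarrow> eta \<theta> = u"
  shows "eta (conJoin F X) = u"
proof -
  obtain \<theta> where \<theta>: "\<theta> \<in> X" using assms(2) by blast
  have "zero_class \<psi> = zero_class \<theta>" if "\<psi> \<in> X" for \<psi>
    using assms(1,3) \<theta> that zero_class_eta by (metis subsetD)
  then have "eta (conJoin F X) = eta \<theta>"
    using assms(1) \<theta> by (intro eta_cong zero_class_conJoin)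
  then show ?thesis using assms(3) \<theta> by simp
qed

subsection \<open>The image of \<open>\<eta>\<close>\<close>

definition principal_con :: "('a::{semilattice_sup,order_bot} \<Rightarrow> 'a) set \<Rightarrow> 'a \<Rightarrow> 'a \<Rightarrow> ('a \<times> 'a) set"
  where "principal_con F a b = conJoin F {{(a, b)}}"

lemma principal_con_Con: "principal_con F a b \<in> Con F"
  by (simp add: principal_con_def conJoin_Con)

lemma pair_in_principal_con: "(a, b) \<in> principal_con F a b"
  using conJoin_upper[of "{(a, b)}" "{{(a, b)}}" F] by (simp add: principal_con_def)

lemma principal_con_least: "\<theta> \<in> Con F \<Longrightarrow> (a, b) \<in> \<theta> \<Longrightarrow> principal_con F a b \<subseteq> \<theta>"
  unfolding principal_con_def by (rule conJoin_least) auto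

lemma principal_con_compact: "con_compact F (principal_con F a b)"
  unfolding con_compact_def
proof (intro conjI principal_con_Con allI impI)
  fix X assume X: "X \<subseteq> Con F" and "principal_con F a b \<subseteq> conJoin F X"
  then have "(a, b) \<in> (\<Union>X)\<^sup>*"
    using pair_in_principal_con unfolding conJoin_eq_rtrancl[OF X] by blast
  then obtain Y where Y: "Y \<subseteq> X" "finite Y" "(a, b) \<in> (\<Union>Y)\<^sup>*"
    by (blast dest: rtrancl_Union_finite)
  have "(a, b) \<in> conJoin F Y"
    using Y(3) X Y(1) by (simp add: conJoin_eq_rtrancl[of Y F])
  then have "principal_con F a b \<subseteq> conJoin F Y"
    by (rule principal_con_least[OF conJoin_Con])
  with Y(1,2) show "\<exists>Y\<subseteq>X. finite Y \<and> principal_con F a b \<subseteq> conJoin F Y"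
    by blast
qed

lemma eta_principal_con:
  assumes ops: "is_operator_set F"
  shows "eta (principal_con F i bot) = principal_con F i bot"
proof (rule subset_antisym)
  show "eta (principal_con F i bot) \<subseteq> principal_con F i bot"
    by (rule eta_subset[OF principal_con_Con])
  have "(i, bot) \<in> eta (principal_con F i bot)"
    using pair_in_principal_con by (force simp: eta_def zero_class_def)
  then show "principal_con F i bot \<subseteq> eta (principal_con F i bot)"
    by (intro principal_con_least eta_Con[OF ops] principal_con_Con)
qed

lemma eta_eq_conJoin_principal_con:
  assumes ops: "is_operator_set F" and \<theta>: "\<theta> \<in> Con F"
  shows "eta \<theta> = conJoin F ((\<lambda>i. principal_con F i bot) ` zero_class \<theta>)"
proof (rule conJoin_unique[symmetric])
  show "eta \<theta> \<in> Con F" using ops \<theta> by (rule eta_Con)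
next
  fix \<phi> assume "\<phi> \<in> (\<lambda>i. principal_con F i bot) ` zero_class \<theta>"
  then obtain i where "\<phi> = principal_con F i bot" "i \<in> zero_class \<theta>" by blast
  moreover have "(i, bot) \<in> eta \<theta>" if "i \<in> zero_class \<theta>"
    using that by (force simp: eta_def)
  ultimately show "\<phi> \<subseteq> eta \<theta>"
    using principal_con_least eta_Con[OF ops \<theta>] by blast
next
  fix \<phi> assume \<phi>: "\<phi> \<in> Con F"
    and sub: "\<And>\<chi>. \<chi> \<in> (\<lambda>i. principal_con F i bot) ` zero_class \<theta> \<Longrightarrow> \<chi> \<subseteq> \<phi>"
  show "eta \<theta> \<subseteq> \<phi>"
  proof clarify
    fix a b assume "(a, b) \<in> eta \<theta>"
    then obtain i where i: "i \<in> zero_class \<theta>" "sup a i = sup b i"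
      by (auto simp: eta_def)
    have "i \<in> zero_class (principal_con F i bot)"
      using pair_in_principal_con by (simp add: zero_class_def)
    with i(2) have "(a, b) \<in> eta (principal_con F i bot)"
      by (auto simp: eta_def)
    then show "(a, b) \<in> \<phi>"
      using eta_subset[OF principal_con_Con] sub i(1) by blast
  qed
qed

lemma eta_conJoin_fixed:
  assumes ops: "is_operator_set F" and X: "X \<subseteq> Con F"
    and fixed: "\<And>\<theta>. \<theta> \<in> X \<Longrightarrow> eta \<theta> = \<theta>"
  shows "eta (conJoin F X) = conJoin F X"
proof (rule subset_antisym)
  show "eta (conJoin F X) \<subseteq> conJoin F X"
    by (rule eta_subset[OF conJoin_Con])
  have "\<theta> \<subseteq> eta (conJoin F X)" if "\<theta> \<in> X" for \<theta>
    using eta_mono[OF conJoin_upper[OF that]] fixed[OF that] by simp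
  then show "conJoin F X \<subseteq> eta (conJoin F X)"
    by (intro conJoin_least eta_Con[OF ops] conJoin_Con)
qed

lemma image_eta_eq_compact_joins:
  assumes ops: "is_operator_set F"
  shows "eta ` Con F = {conJoin F Y | Y. Y \<subseteq> eta ` Con F \<inter> {\<theta>. con_compact F \<theta>}}"
proof safe
  fix \<theta> assume \<theta>: "\<theta> \<in> Con F"
  have "principal_con F i bot \<in> eta ` Con F" for i
    by (metis eta_principal_con[OF ops] principal_con_Con image_eqI)
  then have "(\<lambda>i. principal_con F i bot) ` zero_class \<theta> \<subseteq> eta ` Con F \<inter> {\<theta>. con_compact F \<theta>}"
    using principal_con_compact by blast
  then show "\<exists>Y. eta \<theta> = conJoin F Y \<and> Y \<subseteq> eta ` Con F \<inter> {\<theta>. con_compact F \<theta>}"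
    using eta_eq_conJoin_principal_con[OF ops \<theta>] by blast
next
  fix Y assume Y: "Y \<subseteq> eta ` Con F \<inter> {\<theta>. con_compact F \<theta>}"
  then have "Y \<subseteq> Con F" and "\<And>\<theta>. \<theta> \<in> Y \<Longrightarrow> eta \<theta> = \<theta>"
    using eta_Con[OF ops] eta_idem by blast+
  then have "eta (conJoin F Y) = conJoin F Y"
    by (rule eta_conJoin_fixed[OF ops])
  then show "conJoin F Y \<in> eta ` Con F"
    using conJoin_Con by (metis image_eqI)
qed

theorem theorem5p5:
  fixes F :: "('a::{semilattice_sup,order_bot} \<Rightarrow> 'a) set"
  assumes "is_operator_set F"
  shows "(\<forall>x \<in> Con F. eta x \<subseteq> x)
    \<and> (\<forall>x \<in> Con F. \<forall>y \<in> Con F. y \<subseteq> x \<longrightarrow> eta y \<subseteq> eta x)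
    \<and> (\<forall>x \<in> Con F. eta (eta x) = eta x)
    \<and> eta UNIV = UNIV
    \<and> (\<forall>X u. X \<subseteq> Con F \<longrightarrow> X \<noteq> {} \<longrightarrow> (\<forall>x \<in> X. eta x = u) \<longrightarrow> eta (conJoin F X) = u)
    \<and> (\<forall>x \<in> Con F. \<forall>y \<in> Con F. \<forall>z \<in> Con F.
         conJoin F {eta x, y \<inter> z} = conJoin F {eta x, y} \<inter> conJoin F {eta x, z})
    \<and> eta ` Con F = {conJoin F Y | Y. Y \<subseteq> eta ` Con F \<inter> {\<theta>. con_compact F \<theta>}}"
proof (intro conjI)
  show "\<forall>x \<in> Con F. eta x \<subseteq> x"
    using eta_subset by blast
  show "\<forall>x \<in> Con F. \<forall>y \<in> Con F. y \<subseteq> x \<longrightarrow> eta y \<subseteq> eta x"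
    using eta_mono by blast
  show "\<forall>x \<in> Con F. eta (eta x) = eta x"
    using eta_idem by blast
  show "eta UNIV = UNIV"
    by (rule eta_UNIV)
  show "\<forall>X u. X \<subseteq> Con F \<longrightarrow> X \<noteq> {} \<longrightarrow> (\<forall>x \<in> X. eta x = u) \<longrightarrow> eta (conJoin F X) = u"
    using eta_conJoin_constant by blast
  show "\<forall>x \<in> Con F. \<forall>y \<in> Con F. \<forall>z \<in> Con F.
      conJoin F {eta x, y \<inter> z} = conJoin F {eta x, y} \<inter> conJoin F {eta x, z}"
    using conJoin_eta_Int[OF assms] by blast
  show "eta ` Con F = {conJoin F Y | Y. Y \<subseteq> eta ` Con F \<inter> {\<theta>. con_compact F \<theta>}}"
    using assms by (rule image_eta_eq_compact_joins)
qed

end
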